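(* Let $\lambda$ be a singular cardinal and let $\langle\lambda_i\mid i<\mathrm{cf}(\lambda)\rangle$ be a strictly increasing sequence of regular cardinals cofinal in $\lambda$. Let $\langle f_\alpha\mid\alpha<\lambda^+\rangle$ be a sequence of functions in $\prod_{i<\mathrm{cf}(\lambda)}\lambda_i$ that is unbounded with respect to $<^*$ and satisfies $f_\alpha<^*f_\beta$ for all $\alpha<\beta<\lambda^+$. Then for every $Z\subseteq\lambda^+$ with $|Z|=\lambda^+$, the set $$I_Z:=\{i<\mathrm{cf}(\lambda)\mid \sup\{\epsilon<\lambda_i\mid \sup\{\beta\in Z\mid f_\beta(i)=\epsilon\}=\lambda^+\}=\lambda_i\}$$ is cofinal in $\mathrm{cf}(\lambda)$.
   Context: For $f,g\in\prod_{i<\mathrm{cf}(\lambda)}\lambda_i$, $f<^*g$ means that the set $\{i<\mathrm{cf}(\lambda)\mid f(i)\ge g(i)\}$ is bounded in $\mathrm{cf}(\lambda)$. A family is unbounded with respect to $<^*$ if there is no single $g\in\prod_{i<\mathrm{cf}(\lambda)}\lambda_i$ with $f<^*g$ for all $f$ in the family. *)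

theory Defs
  imports Main
begin

unbundle cardinal_syntax

text \<open>Ordinals below a cardinal are represented as elements of the field of a
 cardinal order relation (HOL-Cardinals convention).  The cardinal lambda is a
 Card_order relation L; lambda^+ is cardSuc L; cf(lambda) is a Card_order c
 with index type 'i.\<close>

definition cof_in :: "'a set \<Rightarrow> 'a rel \<Rightarrow> bool" where
  "cof_in A r \<longleftrightarrow> (\<forall>a\<in>Field r. \<exists>b\<in>A. (a,b) \<in> r)"

definition is_cofinality :: "'a rel \<Rightarrow> 'i rel \<Rightarrow> bool" where
  "is_cofinality L c \<longleftrightarrow> Card_order c \<and>
     (\<exists>K. K \<subseteq> Field L \<and> cof_in K L \<and> (card_of K, c) \<in> ordIso) \<and>
     (\<forall>K. K \<subseteq> Field L \<and> cof_in K L \<longrightarrow> (c, card_of K) \<in> ordLeq)"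

text \<open>sup S = delta, for S a set of ordinals below delta (delta the order type
 of the well-order restricted to D): every gamma < delta lies strictly below some
 element of S.\<close>
definition sup_eq :: "'a rel \<Rightarrow> 'a set \<Rightarrow> 'a set \<Rightarrow> bool" where
  "sup_eq r D S \<longleftrightarrow> (\<forall>\<gamma>\<in>D. \<exists>\<beta>\<in>S. (\<gamma>,\<beta>) \<in> r \<and> \<gamma> \<noteq> \<beta>)"

text \<open>The product of lambda_i, i < cf(lambda), lambda_i = underS L (lam i).\<close>
definition prod_seq :: "'i rel \<Rightarrow> 'a rel \<Rightarrow> ('i \<Rightarrow> 'a) \<Rightarrow> ('i \<Rightarrow> 'a) set" where
  "prod_seq c L lam = {g. \<forall>i\<in>Field c. g i \<in> underS L (lam i)}"

definition less_star :: "'i rel \<Rightarrow> 'a rel \<Rightarrow> ('i \<Rightarrow> 'a) \<Rightarrow> ('i \<Rightarrow> 'a) \<Rightarrow> bool" where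
  "less_star c L f g \<longleftrightarrow>
     (\<exists>j\<in>Field c. \<forall>i\<in>{i\<in>Field c. (g i, f i) \<in> L}. (i,j) \<in> c)"

definition I_Z :: "'i rel \<Rightarrow> 'a rel \<Rightarrow> ('i \<Rightarrow> 'a) \<Rightarrow> ('a set \<Rightarrow> 'i \<Rightarrow> 'a) \<Rightarrow> 'a set set \<Rightarrow> 'i set" where
  "I_Z c L lam f Z = {i\<in>Field c.
     sup_eq L (underS L (lam i))
       {\<epsilon>\<in>underS L (lam i).
          sup_eq (cardSuc L) (Field (cardSuc L)) {\<beta>\<in>Z. f \<beta> i = \<epsilon>}}}"

end

theory Submission
  imports Defs
begin

text \<open>Suppose \<open>I\<^sub>Z\<close> is bounded by some \<open>a < cf(\<lambda>)\<close>. For \<open>i \<ge> a\<close> the values \<open>\<epsilon> < \<lambda>\<^sub>i\<close>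
 whose fibre \<open>{\<beta> \<in> Z. f\<^sub>\<beta>(i) = \<epsilon>}\<close> is unbounded in \<open>\<lambda>\<^sup>+\<close> are bounded in \<open>\<lambda>\<^sub>i\<close>, so there is
 \<open>g(i) < \<lambda>\<^sub>i\<close> above all of them. Each of the at most \<open>\<lambda>\<close> pairs \<open>(i,\<epsilon>)\<close> with \<open>i \<ge> a\<close> and
 \<open>\<epsilon> \<ge> g(i)\<close> then has a fibre bounded below \<open>\<lambda>\<^sup>+\<close>, and since \<open>|Z| = \<lambda>\<^sup>+\<close>, above any
 \<open>\<alpha>\<close> there is \<open>\<beta> \<in> Z\<close> beyond all these bounds. Hence \<open>f\<^sub>\<beta>(i) < g(i)\<close> for all \<open>i \<ge> a\<close>,
 and \<open>f\<^sub>\<alpha> <\<^sup>* f\<^sub>\<beta>\<close> gives \<open>f\<^sub>\<alpha> <\<^sup>* g\<close>: the sequence is bounded, a contradiction.\<close>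

lemma card_of_insert_ordLeq_infinite:
  assumes "infinite B" and "|X| \<le>o |B|"
  shows "|insert x X| \<le>o |B|"
proof -
  have "|{x}| \<le>o |B|"
    using card_of_singl_ordLeq assms(1) by (metis finite.emptyI)
  hence "|{x} \<union> X| \<le>o |B|"
    using card_of_Un_ordLeq_infinite_Field[of "|B|" "{x}" X, unfolded Field_card_of]
      assms card_of_card_order_on by blast
  thus ?thesis by simp
qed

lemma card_of_under_cardSuc_ordLeq:
  assumes L: "Card_order L" and inf: "infinite (Field L)"
    and d: "d \<in> Field (cardSuc L)"
  shows "|under (cardSuc L) d| \<le>o |Field L|"
proof -
  have "|underS (cardSuc L) d| <o cardSuc L"
    using card_of_underS[OF cardSuc_Card_order[OF L] d] .
  hence "|underS (cardSuc L) d| \<le>o L"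
    by (rule cardSuc_ordLeq_ordLess[OF L card_of_Card_order, THEN iffD1])
  hence "|underS (cardSuc L) d| \<le>o |Field L|"
    by (rule ordLeq_ordIso_trans[OF _ ordIso_symmetric[OF card_of_Field_ordIso[OF L]]])
  hence "|insert d (underS (cardSuc L) d)| \<le>o |Field L|"
    by (rule card_of_insert_ordLeq_infinite[OF inf])
  moreover have "under (cardSuc L) d \<subseteq> insert d (underS (cardSuc L) d)"
    unfolding under_def underS_def by auto
  ultimately show ?thesis by (metis card_of_mono1 ordLeq_transitive)
qed

lemma cardSuc_large_subset_above_small_subset:
  assumes L: "Card_order L" and inf: "infinite (Field L)"
    and Z_sub: "Z \<subseteq> Field (cardSuc L)" and Z_card: "|Z| =o cardSuc L"
    and S_sub: "S \<subseteq> Field (cardSuc L)" and S_card: "|S| \<le>o |Field L|"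
  shows "\<exists>\<beta>\<in>Z. \<forall>\<delta>\<in>S. (\<delta>,\<beta>) \<in> cardSuc L \<and> \<delta> \<noteq> \<beta>"
proof -
  let ?K = "cardSuc L"
  have wK: "wo_rel ?K" using Card_order_wo_rel[OF cardSuc_Card_order[OF L]] .
  let ?U = "\<Union>\<delta>\<in>S. under ?K \<delta>"
  have U: "|?U| \<le>o |Field L|"
    using card_of_UNION_ordLeq_infinite[OF inf S_card] card_of_under_cardSuc_ordLeq[OF L inf]
      S_sub by blast
  have "\<not> Z \<subseteq> ?U"
  proof
    assume "Z \<subseteq> ?U"
    hence "|Z| \<le>o |Field L|" using card_of_mono1 U ordLeq_transitive by blast
    hence "?K \<le>o L"
      using Z_card card_of_Field_ordIso[OF L] ordIso_symmetric
        ordIso_ordLeq_trans ordLeq_ordIso_trans by blast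
    thus False using cardSuc_greater[OF L] not_ordLess_ordLeq by blast
  qed
  then obtain \<beta> where \<beta>: "\<beta> \<in> Z" "\<beta> \<notin> ?U" by blast
  have "(\<delta>,\<beta>) \<in> ?K \<and> \<delta> \<noteq> \<beta>" if "\<delta> \<in> S" for \<delta>
  proof -
    have "(\<beta>,\<delta>) \<notin> ?K" using \<beta> that unfolding under_def by blast
    thus ?thesis
      using wo_rel.TOTALS[OF wK] wo_rel.REFL[OF wK] that S_sub \<beta>(1) Z_sub
      unfolding refl_on_def by blast
  qed
  thus ?thesis using \<beta>(1) by blast
qed

lemma Restr_infinite_Card_order_no_greatest:
  assumes "wo_rel r" and "A \<subseteq> Field r"
    and "Card_order (Restr r A)" and "infinite A" and "\<gamma> \<in> A"
  shows "\<exists>x\<in>A. (\<gamma>,x) \<in> r \<and> x \<noteq> \<gamma>"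
proof -
  have "Field (Restr r A) = A"
    using Refl_Field_Restr2 wo_rel.REFL[OF assms(1)] assms(2) by blast
  thus ?thesis using infinite_Card_order_limit[OF assms(3)] assms(4,5) by auto
qed

lemma not_sup_eq_imp_final_segment_disjoint:
  assumes wo: "wo_rel r" and A: "A \<subseteq> Field r"
    and no_greatest: "\<And>\<gamma>. \<gamma> \<in> A \<Longrightarrow> \<exists>x\<in>A. (\<gamma>,x) \<in> r \<and> x \<noteq> \<gamma>"
    and not_sup: "\<not> sup_eq r A S"
  shows "\<exists>x\<in>A. \<forall>\<epsilon>\<in>A. (x,\<epsilon>) \<in> r \<longrightarrow> \<epsilon> \<notin> S"
proof -
  obtain \<gamma> where \<gamma>: "\<gamma> \<in> A" "\<forall>\<epsilon>\<in>S. \<not> ((\<gamma>,\<epsilon>) \<in> r \<and> \<gamma> \<noteq> \<epsilon>)"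
    using not_sup unfolding sup_eq_def by blast
  obtain x where x: "x \<in> A" "(\<gamma>,x) \<in> r" "x \<noteq> \<gamma>" using no_greatest[OF \<gamma>(1)] by blast
  have "\<epsilon> \<notin> S" if "(x,\<epsilon>) \<in> r" for \<epsilon>
  proof
    assume "\<epsilon> \<in> S"
    moreover have "(\<gamma>,\<epsilon>) \<in> r"
      using wo_rel.TRANS[OF wo] x(2) that unfolding trans_def by blast
    ultimately have "\<gamma> = \<epsilon>" using \<gamma>(2) by blast
    thus False using wo_rel.ANTISYM[OF wo] x(2,3) that unfolding antisym_def by blast
  qed
  thus ?thesis using x(1) by blast
qed

lemma exists_choice_final_segments_avoiding:
  assumes wo: "wo_rel L" and "I \<subseteq> J"
    and A: "\<And>i. i \<in> J \<Longrightarrow> A i \<subseteq> Field L \<and> Card_order (Restr L (A i)) \<and> infinite (A i)"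
    and not_sup: "\<And>i. i \<in> I \<Longrightarrow> \<not> sup_eq L (A i) (S i)"
  shows "\<exists>g. \<forall>i\<in>J. g i \<in> A i \<and> (i \<in> I \<longrightarrow> (\<forall>\<epsilon>\<in>A i. (g i,\<epsilon>) \<in> L \<longrightarrow> \<epsilon> \<notin> S i))"
proof -
  have "\<exists>x. x \<in> A i \<and> (i \<in> I \<longrightarrow> (\<forall>\<epsilon>\<in>A i. (x,\<epsilon>) \<in> L \<longrightarrow> \<epsilon> \<notin> S i))"
    if i: "i \<in> J" for i
  proof (cases "i \<in> I")
    case True
    have A_i: "A i \<subseteq> Field L" "Card_order (Restr L (A i))" "infinite (A i)"
      using A[OF i] by auto
    obtain x where "x \<in> A i" "\<forall>\<epsilon>\<in>A i. (x,\<epsilon>) \<in> L \<longrightarrow> \<epsilon> \<notin> S i"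
      using not_sup_eq_imp_final_segment_disjoint[OF wo A_i(1)
          Restr_infinite_Card_order_no_greatest[OF wo A_i] not_sup[OF True]] by blast
    thus ?thesis by blast
  next
    case False
    thus ?thesis using A[OF i] infinite_imp_nonempty by blast
  qed
  hence "\<forall>i\<in>J. \<exists>x. x \<in> A i \<and> (i \<in> I \<longrightarrow> (\<forall>\<epsilon>\<in>A i. (x,\<epsilon>) \<in> L \<longrightarrow> \<epsilon> \<notin> S i))"
    by blast
  thus ?thesis by (rule bchoice)
qed

lemma cardSuc_escape_bounded_fibres:
  fixes h :: "'a set \<Rightarrow> 'i \<Rightarrow> 'b"
  assumes L: "Card_order L" and inf: "infinite (Field L)"
    and Z_sub: "Z \<subseteq> Field (cardSuc L)" and Z_card: "|Z| =o cardSuc L"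
    and I_card: "|I| \<le>o |Field L|" and B_card: "\<And>i. i \<in> I \<Longrightarrow> |B i| \<le>o |Field L|"
    and bounded: "\<And>i \<epsilon>. i \<in> I \<Longrightarrow> \<epsilon> \<in> B i \<Longrightarrow>
      \<not> sup_eq (cardSuc L) (Field (cardSuc L)) {\<beta>\<in>Z. h \<beta> i = \<epsilon>}"
    and \<alpha>: "\<alpha> \<in> Field (cardSuc L)"
  shows "\<exists>\<beta>\<in>Z. (\<alpha>,\<beta>) \<in> cardSuc L \<and> \<alpha> \<noteq> \<beta> \<and> (\<forall>i\<in>I. h \<beta> i \<notin> B i)"
proof -
  let ?K = "cardSuc L"
  let ?P = "SIGMA i:I. B i"
  have "\<forall>p\<in>?P. \<exists>\<delta>. \<delta> \<in> Field ?K \<and>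
      (\<forall>\<beta>\<in>Z. h \<beta> (fst p) = snd p \<longrightarrow> \<not> ((\<delta>,\<beta>) \<in> ?K \<and> \<delta> \<noteq> \<beta>))"
    using bounded unfolding sup_eq_def by fastforce
  from bchoice[OF this] obtain D where D: "\<forall>p\<in>?P. D p \<in> Field ?K \<and>
      (\<forall>\<beta>\<in>Z. h \<beta> (fst p) = snd p \<longrightarrow> \<not> ((D p,\<beta>) \<in> ?K \<and> D p \<noteq> \<beta>))"
    by blast
  have "|?P| \<le>o |Field L|"
    using card_of_Sigma_ordLeq_infinite[OF inf I_card] B_card by blast
  hence "|D ` ?P| \<le>o |Field L|" by (rule ordLeq_transitive[OF card_of_image])
  hence S_card: "|insert \<alpha> (D ` ?P)| \<le>o |Field L|" by (rule card_of_insert_ordLeq_infinite[OF inf])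
  have S_sub: "insert \<alpha> (D ` ?P) \<subseteq> Field ?K" using \<alpha> D by blast
  obtain \<beta> where \<beta>: "\<beta> \<in> Z" "\<forall>\<delta>\<in>insert \<alpha> (D ` ?P). (\<delta>,\<beta>) \<in> ?K \<and> \<delta> \<noteq> \<beta>"
    using cardSuc_large_subset_above_small_subset[OF L inf Z_sub Z_card S_sub S_card] by blast
  have "h \<beta> i \<notin> B i" if "i \<in> I" for i
  proof
    assume "h \<beta> i \<in> B i"
    hence "(i, h \<beta> i) \<in> ?P" using that by blast
    thus False using D \<beta> by fastforce
  qed
  thus ?thesis using \<beta> by blast
qed

lemma less_star_below_on_final_segment:
  assumes c: "wo_rel c" and L: "wo_rel L" and a: "a \<in> Field c"
    and uv: "less_star c L u v"
    and in_Field: "\<And>i. i \<in> Field c \<Longrightarrow> u i \<in> Field L \<and> v i \<in> Field L \<and> g i \<in> Field L"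
    and below: "\<And>i. i \<in> Field c \<Longrightarrow> (a,i) \<in> c \<Longrightarrow> (g i, v i) \<notin> L"
  shows "less_star c L u g"
proof -
  obtain j where j: "j \<in> Field c" "\<And>i. i \<in> Field c \<Longrightarrow> (v i, u i) \<in> L \<Longrightarrow> (i,j) \<in> c"
    using uv unfolding less_star_def by blast
  define m where "m = (if (a,j) \<in> c then j else a)"
  have m: "m \<in> Field c" "(a,m) \<in> c" "(j,m) \<in> c"
    using a j(1) wo_rel.REFL[OF c] wo_rel.TOTALS[OF c] unfolding m_def refl_on_def by auto
  have "(i,m) \<in> c" if i: "i \<in> Field c" "(g i, u i) \<in> L" for i
  proof (cases "(a,i) \<in> c")
    case True
    hence "(v i, g i) \<in> L" using below i(1) in_Field wo_rel.TOTALS[OF L] by blast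
    hence "(v i, u i) \<in> L" using wo_rel.TRANS[OF L] i(2) unfolding trans_def by blast
    thus ?thesis using j(2) i(1) m(3) wo_rel.TRANS[OF c] unfolding trans_def by blast
  next
    case False
    thus ?thesis using i(1) a m(2) wo_rel.TOTALS[OF c] wo_rel.TRANS[OF c]
      unfolding trans_def by blast
  qed
  thus ?thesis using m(1) unfolding less_star_def by blast
qed

lemma less_star_bound_of_bounded_fibres:
  fixes f :: "'a set \<Rightarrow> 'i \<Rightarrow> 'a"
  assumes L: "Card_order L" and inf: "infinite (Field L)" and c: "wo_rel c"
    and c_card: "|Field c| \<le>o |Field L|" and a: "a \<in> Field c"
    and Z_sub: "Z \<subseteq> Field (cardSuc L)" and Z_card: "|Z| =o cardSuc L"
    and A: "\<And>i. A i \<subseteq> Field L"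
    and f_A: "\<And>\<alpha> i. \<alpha> \<in> Field (cardSuc L) \<Longrightarrow> i \<in> Field c \<Longrightarrow> f \<alpha> i \<in> A i"
    and g_A: "\<And>i. i \<in> Field c \<Longrightarrow> g i \<in> A i"
    and f_incr: "\<And>\<alpha> \<beta>. \<alpha> \<in> Field (cardSuc L) \<Longrightarrow> \<beta> \<in> Field (cardSuc L) \<Longrightarrow>
      (\<alpha>,\<beta>) \<in> cardSuc L \<Longrightarrow> \<alpha> \<noteq> \<beta> \<Longrightarrow> less_star c L (f \<alpha>) (f \<beta>)"
    and bounded: "\<And>i \<epsilon>. i \<in> Field c \<Longrightarrow> (a,i) \<in> c \<Longrightarrow> \<epsilon> \<in> A i \<Longrightarrow> (g i,\<epsilon>) \<in> L \<Longrightarrow>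
      \<not> sup_eq (cardSuc L) (Field (cardSuc L)) {\<beta>\<in>Z. f \<beta> i = \<epsilon>}"
    and \<alpha>: "\<alpha> \<in> Field (cardSuc L)"
  shows "less_star c L (f \<alpha>) g"
proof -
  let ?I = "{i\<in>Field c. (a,i) \<in> c}"
  let ?B = "\<lambda>i. {\<epsilon>\<in>A i. (g i,\<epsilon>) \<in> L}"
  have I_card: "|?I| \<le>o |Field L|"
    using c_card by (rule ordLeq_transitive[OF card_of_mono1, rotated]) blast
  have B_card: "|?B i| \<le>o |Field L|" if "i \<in> ?I" for i
    by (rule card_of_mono1) (use A in blast)
  have B_bounded: "\<not> sup_eq (cardSuc L) (Field (cardSuc L)) {\<beta>\<in>Z. f \<beta> i = \<epsilon>}"
    if "i \<in> ?I" "\<epsilon> \<in> ?B i" for i \<epsilon>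
    using bounded that by blast
  obtain \<beta> where \<beta>: "\<beta> \<in> Z" "(\<alpha>,\<beta>) \<in> cardSuc L" "\<alpha> \<noteq> \<beta>" "\<forall>i\<in>?I. f \<beta> i \<notin> ?B i"
    using cardSuc_escape_bounded_fibres[where I = ?I and B = ?B and h = f,
        OF L inf Z_sub Z_card I_card B_card B_bounded \<alpha>]
    by blast
  show ?thesis
  proof (rule less_star_below_on_final_segment[OF c Card_order_wo_rel[OF L] a])
    show "less_star c L (f \<alpha>) (f \<beta>)" using f_incr \<alpha> \<beta> Z_sub by blast
  qed (use \<alpha> \<beta> Z_sub f_A g_A A in blast)+
qed

theorem mainTheorem5:
  fixes L :: "'a rel" and c :: "'i rel" and lam :: "'i \<Rightarrow> 'a"
    and f :: "'a set \<Rightarrow> 'i \<Rightarrow> 'a" and Z :: "'a set set"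
  assumes L_card: "Card_order L" and L_inf: "infinite (Field L)"
    and c_cof: "is_cofinality L c"
    and singular: "(c, L) \<in> ordLess"
    and lam_in: "\<forall>i\<in>Field c. lam i \<in> Field L"
    and lam_regular: "\<forall>i\<in>Field c. Card_order (Restr L (underS L (lam i)))
         \<and> regularCard (Restr L (underS L (lam i))) \<and> infinite (underS L (lam i))"
    and lam_incr: "\<forall>i\<in>Field c. \<forall>j\<in>Field c. (i,j) \<in> c \<and> i \<noteq> j \<longrightarrow>
         (lam i, lam j) \<in> L \<and> lam i \<noteq> lam j"
    and lam_cofinal: "\<forall>a\<in>Field L. \<exists>i\<in>Field c. (a, lam i) \<in> L"
    and f_in: "\<forall>\<alpha>\<in>Field (cardSuc L). f \<alpha> \<in> prod_seq c L lam"
    and f_unbdd: "\<not> (\<exists>g\<in>prod_seq c L lam. \<forall>\<alpha>\<in>Field (cardSuc L). less_star c L (f \<alpha>) g)"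
    and f_incr: "\<forall>\<alpha>\<in>Field (cardSuc L). \<forall>\<beta>\<in>Field (cardSuc L).
         (\<alpha>,\<beta>) \<in> cardSuc L \<and> \<alpha> \<noteq> \<beta> \<longrightarrow> less_star c L (f \<alpha>) (f \<beta>)"
    and Z_sub: "Z \<subseteq> Field (cardSuc L)"
    and Z_card: "(card_of Z, cardSuc L) \<in> ordIso"
  shows "cof_in (I_Z c L lam f Z) c"
proof (rule ccontr)
  let ?fibre_unbounded = "\<lambda>i \<epsilon>. sup_eq (cardSuc L) (Field (cardSuc L)) {\<beta>\<in>Z. f \<beta> i = \<epsilon>}"
  define A where "A i = underS L (lam i)" for i
  have wL: "wo_rel L" using Card_order_wo_rel[OF L_card] .
  have wc: "wo_rel c" using c_cof Card_order_wo_rel unfolding is_cofinality_def by blast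
  have A_Field: "A i \<subseteq> Field L" for i unfolding A_def underS_def Field_def by blast
  assume "\<not> cof_in (I_Z c L lam f Z) c"
  then obtain a where a: "a \<in> Field c" "\<forall>i\<in>I_Z c L lam f Z. (a,i) \<notin> c"
    unfolding cof_in_def by blast
  let ?I = "{i\<in>Field c. (a,i) \<in> c}"
  let ?S = "\<lambda>i. {\<epsilon>\<in>A i. ?fibre_unbounded i \<epsilon>}"
  have not_sup: "\<not> sup_eq L (A i) (?S i)" if "i \<in> ?I" for i
    using a(2) that unfolding I_Z_def A_def by blast
  have A_regular: "A i \<subseteq> Field L \<and> Card_order (Restr L (A i)) \<and> infinite (A i)"
    if "i \<in> Field c" for i
    using A_Field lam_regular that unfolding A_def by blast
  obtain g where g: "\<forall>i\<in>Field c. g i \<in> A i \<and>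
      (i \<in> ?I \<longrightarrow> (\<forall>\<epsilon>\<in>A i. (g i,\<epsilon>) \<in> L \<longrightarrow> \<epsilon> \<notin> ?S i))"
    using exists_choice_final_segments_avoiding[where S = ?S, OF wL _ A_regular not_sup, of ?I]
    by blast
  have "less_star c L (f \<alpha>) g" if "\<alpha> \<in> Field (cardSuc L)" for \<alpha>
  proof (rule less_star_bound_of_bounded_fibres[OF L_card L_inf wc _ a(1) Z_sub Z_card A_Field])
    show "|Field c| \<le>o |Field L|" by (rule card_of_mono2[OF ordLess_imp_ordLeq[OF singular]])
  qed (use f_in f_incr g that in \<open>auto simp: prod_seq_def A_def\<close>)
  moreover have "g \<in> prod_seq c L lam" using g unfolding prod_seq_def A_def by blast
  ultimately show False using f_unbdd by blast
qed

end
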